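(* Let $\kappa$ be a regular uncountable cardinal and $I$ a pleasant ideal on $\kappa$. If there is a thin set $S\in I^*$, then $I$ is quasinormal, and hence normal.
   Context: An ideal on $\kappa$ is a family of subsets of $\kappa$ closed under subsets and finite unions, which is $<\kappa$-complete and contains all singletons. $I^*=\{\kappa\setminus X: X\in I\}$. A set $S$ of ordinals is thin if $\alpha\in S$ implies $\alpha+1\notin S$. For $A\subseteq\kappa$ and $X_\alpha\subseteq\kappa$, $\bigtriangledown_{\alpha\in A}X_\alpha=\{\xi<\kappa:\exists\alpha<\xi\,(\alpha\in A\wedge \xi\in X_\alpha)\}$. $I$ is normal if $X_\alpha\in I$ for all $\alpha<\kappa$ implies $\bigtriangledown_{\alpha<\kappa}X_\alpha\in I$. $I$ is pleasant if whenever $A\in I$ and $X_\alpha\in I$ for all $\alpha$, then $\bigtriangledown_{\alpha\in A}X_\alpha\in I$. $I$ is quasinormal if for every sequence $\langle X_\alpha\rangle_{\alpha<\kappa}$ of members of $I$ there is $Q\in I^*$ with $\bigtriangledown_{\alpha\in Q}X_\alpha\in I$. *)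

theory Defs
  imports Main "HOL-Library.Equipollence" "HOL-Library.Countable_Set"
begin

text \<open>The cardinal kappa is represented by a well-ordered type 'a: its elements are the
ordinals below kappa, ordered by the type's order.\<close>

definition is_cardinal_type :: "'a::wellorder itself \<Rightarrow> bool" where
  "is_cardinal_type _ \<longleftrightarrow> (\<forall>\<alpha>::'a. \<not> ({..<\<alpha>} \<approx> (UNIV::'a set)))"

definition is_regular_type :: "'a::wellorder itself \<Rightarrow> bool" where
  "is_regular_type _ \<longleftrightarrow>
     (\<forall>A::'a set. (\<forall>\<alpha>. \<exists>\<beta>\<in>A. \<alpha> \<le> \<beta>) \<longrightarrow> A \<approx> (UNIV::'a set))"

text \<open>Ordinal successor alpha+1 (below kappa, a limit ordinal).\<close>
definition osucc :: "'a::wellorder \<Rightarrow> 'a" where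
  "osucc \<alpha> = (LEAST \<beta>. \<alpha> < \<beta>)"

definition thin :: "'a::wellorder set \<Rightarrow> bool" where
  "thin S \<longleftrightarrow> (\<forall>\<alpha>\<in>S. osucc \<alpha> \<notin> S)"

definition is_ideal :: "'a::wellorder set set \<Rightarrow> bool" where
  "is_ideal I \<longleftrightarrow>
     (\<forall>X Y. X \<in> I \<and> Y \<subseteq> X \<longrightarrow> Y \<in> I) \<and>
     (\<forall>X Y. X \<in> I \<and> Y \<in> I \<longrightarrow> X \<union> Y \<in> I) \<and>
     (\<forall>(\<gamma>::'a) (X::'a \<Rightarrow> 'a set). (\<forall>\<beta><\<gamma>. X \<beta> \<in> I) \<longrightarrow> (\<Union>\<beta>\<in>{..<\<gamma>}. X \<beta>) \<in> I) \<and>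
     (\<forall>\<alpha>. {\<alpha>} \<in> I)"

definition dual_filter :: "'a set set \<Rightarrow> 'a set set" where
  "dual_filter I = {UNIV - X | X. X \<in> I}"

definition diag_union :: "'a::wellorder set \<Rightarrow> ('a \<Rightarrow> 'a set) \<Rightarrow> 'a set" where
  "diag_union A X = {\<xi>. \<exists>\<alpha><\<xi>. \<alpha> \<in> A \<and> \<xi> \<in> X \<alpha>}"

definition normal_ideal :: "'a::wellorder set set \<Rightarrow> bool" where
  "normal_ideal I \<longleftrightarrow> (\<forall>X. (\<forall>\<alpha>. X \<alpha> \<in> I) \<longrightarrow> diag_union UNIV X \<in> I)"

definition pleasant :: "'a::wellorder set set \<Rightarrow> bool" where
  "pleasant I \<longleftrightarrow> (\<forall>A X. A \<in> I \<and> (\<forall>\<alpha>. X \<alpha> \<in> I) \<longrightarrow> diag_union A X \<in> I)"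

definition quasinormal :: "'a::wellorder set set \<Rightarrow> bool" where
  "quasinormal I \<longleftrightarrow>
     (\<forall>X. (\<forall>\<alpha>. X \<alpha> \<in> I) \<longrightarrow> (\<exists>Q \<in> dual_filter I. diag_union Q X \<in> I))"

end

theory Submission
  imports Defs
begin

text \<open>Write \<open>S + 1\<close> for the image of \<open>S\<close> under the successor map. If \<open>S\<close> is thin then \<open>S + 1\<close>
is disjoint from \<open>S\<close>, so \<open>S \<in> I\<^sup>*\<close> forces \<open>S + 1 \<in> I\<close>. A diagonal union over \<open>S\<close> is, up to
the set \<open>S + 1\<close> itself, a diagonal union over \<open>S + 1\<close> of the same sets re-indexed by \<open>\<alpha> + 1\<close>;
pleasantness puts the latter into \<open>I\<close>. Hence \<open>Q = S\<close> witnesses quasinormality, and normality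
follows by splitting a diagonal union over \<open>\<kappa>\<close> into the parts over \<open>S\<close> and over \<open>\<kappa> - S \<in> I\<close>.\<close>

lemma osucc_greater: "(\<alpha>::'a::wellorder) < \<xi> \<Longrightarrow> \<alpha> < osucc \<alpha>"
  unfolding osucc_def by (rule LeastI)

lemma osucc_least: "(\<alpha>::'a::wellorder) < \<xi> \<Longrightarrow> osucc \<alpha> \<le> \<xi>"
  unfolding osucc_def by (rule Least_le)

lemma inj_on_osucc: "inj_on osucc {\<alpha>::'a::wellorder. \<exists>\<xi>. \<alpha> < \<xi>}"
proof (rule inj_onI)
  fix \<alpha> \<beta> :: 'a
  assume "\<alpha> \<in> {\<alpha>. \<exists>\<xi>. \<alpha> < \<xi>}" "\<beta> \<in> {\<alpha>. \<exists>\<xi>. \<alpha> < \<xi>}" and eq: "osucc \<alpha> = osucc \<beta>"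
  then have "\<alpha> < osucc \<alpha>" "\<beta> < osucc \<beta>" by (blast intro: osucc_greater)+
  with eq show "\<alpha> = \<beta>"
    using osucc_least[of \<alpha> \<beta>] osucc_least[of \<beta> \<alpha>] by (cases \<alpha> \<beta> rule: linorder_cases) auto
qed

definition opred :: "'a::wellorder \<Rightarrow> 'a" where
  "opred = inv_into {\<alpha>. \<exists>\<xi>. \<alpha> < \<xi>} osucc"

lemma opred_osucc: "(\<alpha>::'a::wellorder) < \<xi> \<Longrightarrow> opred (osucc \<alpha>) = \<alpha>"
  unfolding opred_def by (blast intro: inv_into_f_f inj_on_osucc)

lemma ideal_subset: "is_ideal I \<Longrightarrow> X \<in> I \<Longrightarrow> Y \<subseteq> X \<Longrightarrow> Y \<in> I"
  unfolding is_ideal_def by blast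

lemma ideal_Un: "is_ideal I \<Longrightarrow> X \<in> I \<Longrightarrow> Y \<in> I \<Longrightarrow> X \<union> Y \<in> I"
  unfolding is_ideal_def by blast

lemma diag_union_Un: "diag_union (A \<union> B) X = diag_union A X \<union> diag_union B X"
  unfolding diag_union_def by blast

lemma osucc_image_in_ideal:
  assumes "is_ideal I" "thin S" "S \<in> dual_filter I"
  shows "osucc ` S \<in> I"
proof -
  from assms(3) obtain Z where "Z \<in> I" "S = UNIV - Z"
    unfolding dual_filter_def by blast
  moreover have "osucc ` S \<subseteq> UNIV - S"
    using assms(2) unfolding thin_def by blast
  ultimately show ?thesis
    using ideal_subset[OF assms(1)] by blast
qed

lemma diag_union_subset_osucc_shift:
  "diag_union S X \<subseteq> diag_union (osucc ` S) (X \<circ> opred) \<union> osucc ` S"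
proof
  fix \<xi> assume "\<xi> \<in> diag_union S X"
  then obtain \<alpha> where \<alpha>: "\<alpha> < \<xi>" "\<alpha> \<in> S" "\<xi> \<in> X \<alpha>"
    unfolding diag_union_def by blast
  show "\<xi> \<in> diag_union (osucc ` S) (X \<circ> opred) \<union> osucc ` S"
  proof (cases "osucc \<alpha> = \<xi>")
    case True
    with \<alpha>(2) show ?thesis by blast
  next
    case False
    with osucc_least[OF \<alpha>(1)] have "osucc \<alpha> < \<xi>" by simp
    moreover have "\<xi> \<in> (X \<circ> opred) (osucc \<alpha>)"
      using \<alpha>(3) opred_osucc[OF \<alpha>(1)] by simp
    ultimately show ?thesis
      using \<alpha>(2) unfolding diag_union_def by blast
  qed
qed

lemma diag_union_thin_in_ideal:
  assumes "is_ideal I" "pleasant I" "thin S" "S \<in> dual_filter I" "\<forall>\<alpha>. X \<alpha> \<in> I"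
  shows "diag_union S X \<in> I"
proof -
  have "osucc ` S \<in> I"
    using assms(1,3,4) by (rule osucc_image_in_ideal)
  moreover from this have "diag_union (osucc ` S) (X \<circ> opred) \<in> I"
    using assms(2,5) unfolding pleasant_def by simp
  ultimately show ?thesis
    using diag_union_subset_osucc_shift ideal_Un[OF assms(1)] ideal_subset[OF assms(1)]
    by meson
qed

lemma quasinormal_if_thin_in_dual_filter:
  assumes "is_ideal I" "pleasant I" "thin S" "S \<in> dual_filter I"
  shows "quasinormal I"
  unfolding quasinormal_def using diag_union_thin_in_ideal[OF assms] assms(4) by blast

lemma normal_if_pleasant_quasinormal:
  assumes "is_ideal I" "pleasant I" "quasinormal I"
  shows "normal_ideal I"
  unfolding normal_ideal_def
proof (intro allI impI)
  fix X :: "'a \<Rightarrow> 'a set" assume X: "\<forall>\<alpha>. X \<alpha> \<in> I"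
  with assms(3) obtain Q where "Q \<in> dual_filter I" "diag_union Q X \<in> I"
    unfolding quasinormal_def by blast
  moreover from this obtain Z where "Z \<in> I" "Q = UNIV - Z"
    unfolding dual_filter_def by blast
  moreover from this have "diag_union Z X \<in> I"
    using assms(2) X unfolding pleasant_def by blast
  ultimately have "diag_union (Q \<union> Z) X \<in> I"
    using diag_union_Un ideal_Un[OF assms(1)] by metis
  moreover have "Q \<union> Z = UNIV"
    using \<open>Q = UNIV - Z\<close> by blast
  ultimately show "diag_union UNIV X \<in> I" by simp
qed

theorem theorem3p11:
  fixes I :: "'a::wellorder set set"
  assumes "is_cardinal_type TYPE('a)"
    and "is_regular_type TYPE('a)"
    and "uncountable (UNIV :: 'a set)"
    and "is_ideal I"
    and "pleasant I"
    and "\<exists>S. thin S \<and> S \<in> dual_filter I"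
  shows "quasinormal I \<and> normal_ideal I"
proof -
  from assms(6) obtain S where "thin S" "S \<in> dual_filter I" by blast
  then have "quasinormal I"
    using assms(4,5) quasinormal_if_thin_in_dual_filter by blast
  with assms(4,5) show ?thesis
    using normal_if_pleasant_quasinormal by blast
qed

end
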